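(* Let $E$ be a graph and $X\subseteq{\rm Reg}(E)$. Then $D(\partial_X(E))\delta_0=\{a\delta_0:a\in D(\partial_X(E))\}$ is a maximal commutative subring of $D(\partial_X(E))\rtimes_\alpha\mathbb F$ (i.e., every element of $D(\partial_X(E))\rtimes_\alpha\mathbb F$ commuting with all of $D(\partial_X(E))\delta_0$ lies in $D(\partial_X(E))\delta_0$) if and only if $E$ satisfies Relative Condition (L).
   Context: Let $K$ be a field and $E=(E^0,E^1,r,s)$ a directed graph. A vertex $v$ is a sink if $s^{-1}(v)=\emptyset$, regular if $s^{-1}(v)$ is finite and nonempty; ${\rm Reg}(E)$ is the set of regular vertices; $Y={\rm Reg}(E)\setminus X$. Finite paths are $\xi_1\cdots\xi_n$ with $r(\xi_i)=s(\xi_{i+1})$, vertices being paths of length $0$; $E^\infty$ is the set of infinite paths. A cycle is a path $e_1\cdots e_n$ ($n\ge1$) with $r(e_n)=s(e_1)$ and $s(e_i)\ne s(e_j)$ for $i\neq j$; an exit is an edge $e$ with $s(e)=s(e_i)$ for some $i$ and $e\ne e_i$. $E$ satisfies Relative Condition (L) if every cycle $e_1\cdots e_n$ with $s(e_i)\notin Y$ for all $i$ has an exit. The relative boundary path space is $\partial_X(E)=E^\infty\cup\{\xi \text{ finite path}: r(\xi)\text{ is a sink}\}\cup\{\xi\text{ finite path}: r(\xi)\in Y\}$. Let $\mathbb F$ be the free group on $E^1$ with identity $0$, and $W$ the set of finite paths of length $\ge1$, viewed in $\mathbb F$. Define subsets of $\partial_X(E)$: $U_0=\partial_X(E)$; $U_{b^{-1}}=\{\xi: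 s(\xi)=r(b)\}$ for $b\in W$; $U_a=\{\xi: \xi_1\cdots\xi_{|a|}=a\}$ for $a\in W$; $U_{ab^{-1}}=U_a$ for $a,b\in W$ with $r(a)=r(b)$ and $a_{|a|}\ne b_{|b|}$; $U_c=\emptyset$ for all other $c$; and $U_v=\{\xi: s(\xi)=v\}$ for $v\in E^0$. Maps $\theta_c:U_{c^{-1}}\to U_c$: $\theta_0={\rm id}$; $\theta_b(\xi)=b\xi$ for $b\in W$; $\theta_{b^{-1}}$ deletes the initial segment $b$ (sending $b$ to $r(b)$); $\theta_{ab^{-1}}$ deletes the initial segment $b$ and prepends $a$. Let $1_c$, $1_v$ be the characteristic functions of $U_c$, $U_v$ (functions $\partial_X(E)\to K$). Put $D_0=D(\partial_X(E))={\rm span}_K(\{1_p:p\ne0\}\cup\{1_v:v\in E^0\})$ and $D_p={\rm span}_K\{1_p1_q:q\in\mathbb F\}$ for $p\neq0$; $\alpha_p:D_{p^{-1}}\to D_p$, $\alpha_p(f)=f\circ\theta_{p^{-1}}$ on $U_p$ and $0$ elsewhere. $D(\partial_X(E))\rtimes_\alpha\mathbb F$ is the set of finite sums $\sum a_t\delta_t$, $a_t\in D_t$, with multiplication $(a_t\delta_t)(b_s\delta_s)=\alpha_t(\alpha_{t^{-1}}(a_t)b_s)\delta_{ts}$. *)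

theory Defs
  imports Main
begin

record ('v, 'e) graph =
  verts :: "'v set"
  edges :: "'e set"
  rng   :: "'e \<Rightarrow> 'v"
  src   :: "'e \<Rightarrow> 'v"

definition wf_graph :: "('v, 'e) graph \<Rightarrow> bool" where
  "wf_graph G \<longleftrightarrow> (\<forall>e\<in>edges G. src G e \<in> verts G \<and> rng G e \<in> verts G)"

definition is_sink :: "('v, 'e) graph \<Rightarrow> 'v \<Rightarrow> bool" where
  "is_sink G v \<longleftrightarrow> v \<in> verts G \<and> {e \<in> edges G. src G e = v} = {}"

definition is_regular :: "('v, 'e) graph \<Rightarrow> 'v \<Rightarrow> bool" where
  "is_regular G v \<longleftrightarrow> v \<in> verts G \<and> finite {e \<in> edges G. src G e = v}
                      \<and> {e \<in> edges G. src G e = v} \<noteq> {}"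

definition Reg :: "('v, 'e) graph \<Rightarrow> 'v set" where
  "Reg G = {v. is_regular G v}"

definition is_fpath :: "('v, 'e) graph \<Rightarrow> 'e list \<Rightarrow> bool" where
  "is_fpath G es \<longleftrightarrow> es \<noteq> [] \<and> set es \<subseteq> edges G
     \<and> (\<forall>i. Suc i < length es \<longrightarrow> rng G (es ! i) = src G (es ! Suc i))"

definition is_ipath :: "('v, 'e) graph \<Rightarrow> (nat \<Rightarrow> 'e) \<Rightarrow> bool" where
  "is_ipath G f \<longleftrightarrow> (\<forall>i. f i \<in> edges G \<and> rng G (f i) = src G (f (Suc i)))"

text \<open>Cycles, exits and Relative Condition (L); Y = Reg(E) - X.\<close>
definition is_cycle :: "('v, 'e) graph \<Rightarrow> 'e list \<Rightarrow> bool" where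
  "is_cycle G es \<longleftrightarrow> is_fpath G es \<and> rng G (last es) = src G (hd es)
     \<and> distinct (map (src G) es)"

definition has_exit :: "('v, 'e) graph \<Rightarrow> 'e list \<Rightarrow> bool" where
  "has_exit G es \<longleftrightarrow> (\<exists>e\<in>edges G. \<exists>i<length es. src G e = src G (es ! i) \<and> e \<noteq> es ! i)"

definition rel_condition_L :: "('v, 'e) graph \<Rightarrow> 'v set \<Rightarrow> bool" where
  "rel_condition_L G X \<longleftrightarrow>
     (\<forall>es. is_cycle G es \<and> (\<forall>i<length es. src G (es ! i) \<notin> Reg G - X) \<longrightarrow> has_exit G es)"

text \<open>Paths: a vertex (length 0), a finite path of length \<ge> 1, or an infinite path.\<close>
datatype ('v, 'e) bpath = BV 'v | BF "'e list" | BI "nat \<Rightarrow> 'e"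

fun bsrc :: "('v, 'e) graph \<Rightarrow> ('v, 'e) bpath \<Rightarrow> 'v" where
  "bsrc G (BV v) = v"
| "bsrc G (BF es) = src G (hd es)"
| "bsrc G (BI f) = src G (f 0)"

definition bdry :: "('v, 'e) graph \<Rightarrow> 'v set \<Rightarrow> ('v, 'e) bpath set" where
  "bdry G X =
     {BI f | f. is_ipath G f}
   \<union> {BV v | v. v \<in> verts G \<and> (is_sink G v \<or> v \<in> Reg G - X)}
   \<union> {BF es | es. is_fpath G es \<and> (is_sink G (rng G (last es)) \<or> rng G (last es) \<in> Reg G - X)}"

fun has_prefix :: "'e list \<Rightarrow> ('v, 'e) bpath \<Rightarrow> bool" where
  "has_prefix a (BV v) \<longleftrightarrow> a = []"
| "has_prefix a (BF es) \<longleftrightarrow> length a \<le> length es \<and> take (length a) es = a"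
| "has_prefix a (BI f) \<longleftrightarrow> (\<forall>i<length a. f i = a ! i)"

text \<open>Delete the initial segment of length n (a full finite path b becomes r(b)).\<close>
fun drop_pre :: "('v, 'e) graph \<Rightarrow> nat \<Rightarrow> ('v, 'e) bpath \<Rightarrow> ('v, 'e) bpath" where
  "drop_pre G n (BV v) = BV v"
| "drop_pre G n (BF es) =
     (if n < length es then BF (drop n es)
      else if n = length es then BV (rng G (last es)) else BF es)"
| "drop_pre G n (BI f) = BI (\<lambda>i. f (i + n))"

fun prepend :: "'e list \<Rightarrow> ('v, 'e) bpath \<Rightarrow> ('v, 'e) bpath" where
  "prepend a (BV v) = (if a = [] then BV v else BF a)"
| "prepend a (BF es) = BF (a @ es)"
| "prepend a (BI f) = BI (\<lambda>i. if i < length a then a ! i else f (i - length a))"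

text \<open>A letter (e, False) is the generator e, (e, True) is its inverse.\<close>
type_synonym 'e fword = "('e \<times> bool) list"

definition reduced :: "'e fword \<Rightarrow> bool" where
  "reduced w \<longleftrightarrow> (\<forall>i. Suc i < length w \<longrightarrow>
      \<not> (fst (w ! i) = fst (w ! Suc i) \<and> snd (w ! i) \<noteq> snd (w ! Suc i)))"

definition red_step :: "('e \<times> bool) \<Rightarrow> 'e fword \<Rightarrow> 'e fword" where
  "red_step x acc = (case acc of [] \<Rightarrow> [x]
     | y # ys \<Rightarrow> (if fst x = fst y \<and> snd x \<noteq> snd y then ys else x # acc))"

definition reduce :: "'e fword \<Rightarrow> 'e fword" where
  "reduce w = foldr red_step w []"

definition fmul :: "'e fword \<Rightarrow> 'e fword \<Rightarrow> 'e fword" where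
  "fmul u v = reduce (u @ v)"

definition finv :: "'e fword \<Rightarrow> 'e fword" where
  "finv u = rev (map (\<lambda>(e, b). (e, \<not> b)) u)"

text \<open>The free group F on E^1; its identity (denoted 0 in the paper) is the empty word.\<close>
definition FG :: "('v, 'e) graph \<Rightarrow> 'e fword set" where
  "FG G = {w. reduced w \<and> fst ` set w \<subseteq> edges G}"

text \<open>Decomposition of a word c as a b^{-1} with a, b positive words (when possible).\<close>
definition pos_part :: "'e fword \<Rightarrow> 'e list" where
  "pos_part c = map fst (takeWhile (\<lambda>x. \<not> snd x) c)"

definition neg_part :: "'e fword \<Rightarrow> 'e list" where
  "neg_part c = rev (map fst (dropWhile (\<lambda>x. \<not> snd x) c))"

definition is_ab_inv :: "'e fword \<Rightarrow> bool" where
  "is_ab_inv c \<longleftrightarrow> (\<forall>x\<in>set (dropWhile (\<lambda>x. \<not> snd x) c). snd x)"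

definition U :: "('v, 'e) graph \<Rightarrow> 'v set \<Rightarrow> 'e fword \<Rightarrow> ('v, 'e) bpath set" where
  "U G X c =
    (let a = pos_part c; b = neg_part c in
     if is_ab_inv c then
       (if a = [] \<and> b = [] then bdry G X
        else if a = [] then
          (if is_fpath G b then {\<xi> \<in> bdry G X. bsrc G \<xi> = rng G (last b)} else {})
        else if b = [] then
          (if is_fpath G a then {\<xi> \<in> bdry G X. has_prefix a \<xi>} else {})
        else if is_fpath G a \<and> is_fpath G b \<and> rng G (last a) = rng G (last b)
                \<and> last a \<noteq> last b
          then {\<xi> \<in> bdry G X. has_prefix a \<xi>} else {})
     else {})"

definition Uv :: "('v, 'e) graph \<Rightarrow> 'v set \<Rightarrow> 'v \<Rightarrow> ('v, 'e) bpath set" where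
  "Uv G X v = {\<xi> \<in> bdry G X. bsrc G \<xi> = v}"

definition theta :: "('v, 'e) graph \<Rightarrow> 'e fword \<Rightarrow> ('v, 'e) bpath \<Rightarrow> ('v, 'e) bpath" where
  "theta G c \<xi> = prepend (pos_part c) (drop_pre G (length (neg_part c)) \<xi>)"

definition ind :: "('v, 'e) graph \<Rightarrow> 'v set \<Rightarrow> 'e fword \<Rightarrow> ('v, 'e) bpath \<Rightarrow> 'k::field" where
  "ind G X c \<xi> = (if \<xi> \<in> U G X c then 1 else 0)"

definition indv :: "('v, 'e) graph \<Rightarrow> 'v set \<Rightarrow> 'v \<Rightarrow> ('v, 'e) bpath \<Rightarrow> 'k::field" where
  "indv G X v \<xi> = (if \<xi> \<in> Uv G X v then 1 else 0)"

definition lspan :: "('a \<Rightarrow> 'k::field) set \<Rightarrow> ('a \<Rightarrow> 'k) set" where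
  "lspan S = {f. \<exists>T c. finite T \<and> T \<subseteq> S \<and> f = (\<lambda>x. \<Sum>g\<in>T. c g * g x)}"

definition D0 :: "('v, 'e) graph \<Rightarrow> 'v set \<Rightarrow> (('v, 'e) bpath \<Rightarrow> 'k::field) set" where
  "D0 G X = lspan ({ind G X p | p. p \<in> FG G \<and> p \<noteq> []} \<union> {indv G X v | v. v \<in> verts G})"

definition Dp :: "('v, 'e) graph \<Rightarrow> 'v set \<Rightarrow> 'e fword \<Rightarrow> (('v, 'e) bpath \<Rightarrow> 'k::field) set" where
  "Dp G X p = (if p = [] then D0 G X
               else lspan {(\<lambda>\<xi>. ind G X p \<xi> * ind G X q \<xi>) | q. q \<in> FG G})"

definition alpha :: "('v, 'e) graph \<Rightarrow> 'v set \<Rightarrow> 'e fword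
    \<Rightarrow> (('v, 'e) bpath \<Rightarrow> 'k::field) \<Rightarrow> ('v, 'e) bpath \<Rightarrow> 'k" where
  "alpha G X p f \<xi> = (if \<xi> \<in> U G X p then f (theta G (finv p) \<xi>) else 0)"

text \<open>An element \<Sum> a_t \<delta>_t is represented by the finitely supported coefficient map t \<mapsto> a_t.\<close>
definition CP :: "('v, 'e) graph \<Rightarrow> 'v set \<Rightarrow> ('e fword \<Rightarrow> ('v, 'e) bpath \<Rightarrow> 'k::field) set" where
  "CP G X = {x. (\<forall>t. if t \<in> FG G then x t \<in> Dp G X t else x t = (\<lambda>_. 0))
              \<and> finite {t. x t \<noteq> (\<lambda>_. 0)}}"

definition cp_mult :: "('v, 'e) graph \<Rightarrow> 'v set
    \<Rightarrow> ('e fword \<Rightarrow> ('v, 'e) bpath \<Rightarrow> 'k::field)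
    \<Rightarrow> ('e fword \<Rightarrow> ('v, 'e) bpath \<Rightarrow> 'k)
    \<Rightarrow> ('e fword \<Rightarrow> ('v, 'e) bpath \<Rightarrow> 'k)" where
  "cp_mult G X x y g \<xi> =
     (\<Sum>t\<in>{t. x t \<noteq> (\<lambda>_. 0)}. \<Sum>u\<in>{u. y u \<noteq> (\<lambda>_. 0)}.
        if fmul t u = g
        then alpha G X t (\<lambda>\<zeta>. alpha G X (finv t) (x t) \<zeta> * y u \<zeta>) \<xi>
        else 0)"

definition delta0 :: "(('v, 'e) bpath \<Rightarrow> 'k::field) \<Rightarrow> 'e fword \<Rightarrow> ('v, 'e) bpath \<Rightarrow> 'k" where
  "delta0 a t = (if t = [] then a else (\<lambda>_. 0))"

end

theory Submission
  imports Defs "HOL-Library.Indicator_Function"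
begin

text \<open>
  Commutation of \<open>x = \<Sum> x_t \<delta>_t\<close> with \<open>a \<delta>_0\<close> says, coefficientwise, that
  \<open>x_t(\<xi>) a(\<theta>_{t^-1}(\<xi>)) = x_t(\<xi>) a(\<xi>)\<close> on \<open>U_t\<close>. Since \<open>D(\<partial>_X(E))\<close> separates
  points, \<open>x_t\<close> vanishes at every boundary path not fixed by \<open>\<theta>_{t^-1}\<close>. For \<open>t \<noteq> 0\<close>
  a fixed point of \<open>\<theta>_{t^-1}\<close> is an eventually periodic infinite path, so it eventually
  winds around a cycle; under Relative Condition (L) that cycle has an exit or passes
  through \<open>Y\<close>, which produces non-fixed boundary paths with any prescribed initial
  segment of the fixed point. As \<open>x_t\<close> is locally constant, it vanishes identically.
  Conversely, if a cycle \<open>c\<close> avoiding \<open>Y\<close> has no exit, the periodic path \<open>c c c \<dots>\<close> is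
  the only boundary path starting with \<open>c\<close>; it is fixed by \<open>\<theta>_c\<close> and \<open>\<theta>_{c^-1}\<close>, so
  \<open>1_c \<delta>_c\<close> commutes with the diagonal without lying in it.
\<close>


definition path_word :: "'e list \<Rightarrow> 'e fword" where
  "path_word a = map (\<lambda>e. (e, False)) a"

definition inv_path_word :: "'e list \<Rightarrow> 'e fword" where
  "inv_path_word b = map (\<lambda>e. (e, True)) (rev b)"

lemma path_word_Nil [simp]: "path_word [] = []"
  and inv_path_word_Nil [simp]: "inv_path_word [] = []"
  by (simp_all add: path_word_def inv_path_word_def)

lemma takeWhile_path_word_append:
  "takeWhile (\<lambda>x. \<not> snd x) (path_word a @ inv_path_word b) = path_word a"
proof -
  have "takeWhile (\<lambda>x. \<not> snd x) (inv_path_word b) = []"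
    by (cases "rev b") (simp_all add: inv_path_word_def)
  then show ?thesis
    by (induction a) (simp_all add: path_word_def)
qed

lemma dropWhile_path_word_append:
  "dropWhile (\<lambda>x. \<not> snd x) (path_word a @ inv_path_word b) = inv_path_word b"
proof -
  have "dropWhile (\<lambda>x. \<not> snd x) (inv_path_word b) = inv_path_word b"
    by (cases "rev b") (simp_all add: inv_path_word_def)
  then show ?thesis
    by (induction a) (simp_all add: path_word_def)
qed

lemma pos_part_words [simp]: "pos_part (path_word a @ inv_path_word b) = a"
  and neg_part_words [simp]: "neg_part (path_word a @ inv_path_word b) = b"
  and is_ab_inv_words [simp]: "is_ab_inv (path_word a @ inv_path_word b)"
  by (simp_all add: pos_part_def neg_part_def is_ab_inv_def takeWhile_path_word_append
      dropWhile_path_word_append) (simp_all add: path_word_def inv_path_word_def rev_map comp_def)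

lemma path_word_parts [simp]: "pos_part (path_word a) = a" "neg_part (path_word a) = []"
    "is_ab_inv (path_word a)"
  using pos_part_words[of a "[]"] neg_part_words[of a "[]"] is_ab_inv_words[of a "[]"] by simp_all

lemma inv_path_word_parts [simp]: "pos_part (inv_path_word b) = []"
    "neg_part (inv_path_word b) = b" "is_ab_inv (inv_path_word b)"
  using pos_part_words[of "[]" b] neg_part_words[of "[]" b] is_ab_inv_words[of "[]" b] by simp_all

lemma Nil_parts [simp]: "pos_part [] = []" "neg_part [] = []" "is_ab_inv []"
  using path_word_parts[of "[]"] by simp_all

lemma finv_words [simp]: "finv (path_word a @ inv_path_word b) = path_word b @ inv_path_word a"
  by (simp add: finv_def path_word_def inv_path_word_def rev_map comp_def)

lemma finv_finv [simp]: "finv (finv w) = w"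
  by (induction w) (auto simp: finv_def)

lemma ab_inv_decomp:
  assumes "is_ab_inv t"
  shows "t = path_word (pos_part t) @ inv_path_word (neg_part t)"
proof -
  have pos: "path_word (pos_part t) = takeWhile (\<lambda>x. \<not> snd x) t"
    unfolding path_word_def pos_part_def by (induction t) auto
  have "map (\<lambda>e. (e, True)) (map fst l) = l" if "\<forall>x\<in>set l. snd x" for l :: "'e fword"
    using that by (induction l) auto
  from this[of "dropWhile (\<lambda>x. \<not> snd x) t"]
  have neg: "inv_path_word (neg_part t) = dropWhile (\<lambda>x. \<not> snd x) t"
    using assms unfolding inv_path_word_def neg_part_def is_ab_inv_def rev_rev_ident .
  show ?thesis
    unfolding pos neg by simp
qed

lemma ab_inv_eq_Nil:
  assumes "is_ab_inv t" "pos_part t = []" "neg_part t = []"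
  shows "t = []"
proof -
  have "t = path_word (pos_part t) @ inv_path_word (neg_part t)"
    using assms(1) by (rule ab_inv_decomp)
  also have "\<dots> = []"
    using assms(2,3) by simp
  finally show ?thesis .
qed

lemma finv_ab_inv:
  assumes "is_ab_inv t"
  shows "finv t = path_word (neg_part t) @ inv_path_word (pos_part t)"
proof -
  have "finv t = finv (path_word (pos_part t) @ inv_path_word (neg_part t))"
    using ab_inv_decomp[OF assms] by (rule arg_cong)
  then show ?thesis
    by simp
qed

lemma reduce_reduced: "reduced w \<Longrightarrow> reduce w = w"
proof (induction w)
  case Nil
  show ?case by (simp add: reduce_def)
next
  case (Cons x w)
  then have "reduced w"
    by (auto simp: reduced_def)
  with Cons have "reduce (x # w) = red_step x w"
    by (simp add: reduce_def)
  also have "\<dots> = x # w"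
  proof (cases w)
    case (Cons y ys)
    then have "\<not> (fst x = fst y \<and> snd x \<noteq> snd y)"
      using Cons.prems[unfolded reduced_def, rule_format, of 0] by simp
    with Cons show ?thesis
      by (simp add: red_step_def)
  qed (simp add: red_step_def)
  finally show ?case .
qed

lemma fmul_Nil_right: "t \<in> FG G \<Longrightarrow> fmul t [] = t"
  and fmul_Nil_left: "t \<in> FG G \<Longrightarrow> fmul [] t = t"
  by (simp_all add: fmul_def FG_def reduce_reduced)

lemma Nil_in_FG: "[] \<in> FG G"
  by (simp add: FG_def reduced_def)

lemma path_word_in_FG: "is_fpath G a \<Longrightarrow> path_word a \<in> FG G \<and> path_word a \<noteq> []"
  by (auto simp: FG_def reduced_def path_word_def is_fpath_def)


section \<open>Boundary paths\<close>

definition terminal :: "('v, 'e) graph \<Rightarrow> 'v set \<Rightarrow> 'v \<Rightarrow> bool" where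
  "terminal G X v \<longleftrightarrow> is_sink G v \<or> v \<in> Reg G - X"

lemma BV_in_bdry: "BV v \<in> bdry G X \<longleftrightarrow> v \<in> verts G \<and> terminal G X v"
  and BF_in_bdry: "BF es \<in> bdry G X \<longleftrightarrow> is_fpath G es \<and> terminal G X (rng G (last es))"
  and BI_in_bdry: "BI f \<in> bdry G X \<longleftrightarrow> is_ipath G f"
  by (auto simp: bdry_def terminal_def)

lemma is_fpath_nonempty: "is_fpath G es \<Longrightarrow> es \<noteq> []"
  by (simp add: is_fpath_def)

lemma is_fpath_append:
  assumes "is_fpath G a" "is_fpath G b" "rng G (last a) = src G (hd b)"
  shows "is_fpath G (a @ b)"
  unfolding is_fpath_def
proof (intro conjI allI impI)
  show "a @ b \<noteq> []" "set (a @ b) \<subseteq> edges G"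
    using assms(1,2) by (auto simp: is_fpath_def)
  fix i assume i: "Suc i < length (a @ b)"
  consider "Suc i < length a" | "Suc i = length a" | "length a \<le> i"
    by linarith
  then show "rng G ((a @ b) ! i) = src G ((a @ b) ! Suc i)"
  proof cases
    case 2
    then have "i = length a - 1"
      by simp
    with 2 assms show ?thesis
      by (auto simp: nth_append last_conv_nth hd_conv_nth is_fpath_def)
  qed (use assms i in \<open>auto simp: nth_append is_fpath_def Suc_diff_le\<close>)
qed

lemma is_ipath_prepend:
  assumes "is_fpath G a" "is_ipath G f" "rng G (last a) = src G (f 0)"
  shows "is_ipath G (\<lambda>i. if i < length a then a ! i else f (i - length a))"
  unfolding is_ipath_def
proof (intro allI conjI)
  fix i
  show "(if i < length a then a ! i else f (i - length a)) \<in> edges G"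
    using assms(1,2) by (auto simp: is_fpath_def is_ipath_def)
  consider "Suc i < length a" | "Suc i = length a" | "length a \<le> i"
    by linarith
  then show "rng G (if i < length a then a ! i else f (i - length a)) =
             src G (if Suc i < length a then a ! Suc i else f (Suc i - length a))"
  proof cases
    case 2
    then have "i = length a - 1"
      by simp
    with 2 assms show ?thesis
      by (auto simp: last_conv_nth is_fpath_def)
  qed (use assms in \<open>auto simp: is_fpath_def is_ipath_def Suc_diff_le\<close>)
qed

lemma is_ipath_initial_segment:
  "is_ipath G f \<Longrightarrow> 0 < k \<Longrightarrow> is_fpath G (map f [i..<i + k])"
  by (auto simp: is_fpath_def is_ipath_def)

fun edge_at :: "('v, 'e) bpath \<Rightarrow> nat \<Rightarrow> 'e option" where
  "edge_at (BV v) i = None"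
| "edge_at (BF es) i = (if i < length es then Some (es ! i) else None)"
| "edge_at (BI f) i = Some (f i)"

lemma take_length_eq_iff_nth:
  "length a \<le> length es \<and> take (length a) es = a \<longleftrightarrow>
   (\<forall>i<length a. i < length es \<and> es ! i = a ! i)"
proof
  assume "\<forall>i<length a. i < length es \<and> es ! i = a ! i"
  moreover from this have "length a \<le> length es"
    using not_le by blast
  ultimately show "length a \<le> length es \<and> take (length a) es = a"
    by (simp add: list_eq_iff_nth_eq)
qed (metis nth_take order_less_le_trans)

lemma has_prefix_iff_edge_at:
  "has_prefix a \<xi> \<longleftrightarrow> (\<forall>i<length a. edge_at \<xi> i = Some (a ! i))"
proof (cases \<xi>)
  case (BV v)
  then show ?thesis
    by (cases a) auto
qed (auto simp: take_length_eq_iff_nth)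

lemma edge_at_mono: "edge_at \<xi> j \<noteq> None \<Longrightarrow> i \<le> j \<Longrightarrow> edge_at \<xi> i \<noteq> None"
  by (cases \<xi>) (auto split: if_splits)

context
  fixes G :: "('v, 'e) graph" and X :: "'v set" and \<xi> :: "('v, 'e) bpath"
  assumes \<xi>: "\<xi> \<in> bdry G X"
begin

lemma edge_at_in_edges: "edge_at \<xi> i = Some e \<Longrightarrow> e \<in> edges G"
  using \<xi> by (cases \<xi>) (auto simp: BF_in_bdry BI_in_bdry is_fpath_def is_ipath_def split: if_splits)

lemma edge_at_Suc:
  "edge_at \<xi> i = Some e \<Longrightarrow> edge_at \<xi> (Suc i) = Some e' \<Longrightarrow> rng G e = src G e'"
  using \<xi> by (cases \<xi>) (auto simp: BF_in_bdry BI_in_bdry is_fpath_def is_ipath_def split: if_splits)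

lemma src_edge_at_0: "edge_at \<xi> 0 = Some e \<Longrightarrow> src G e = bsrc G \<xi>"
  using \<xi> by (cases \<xi>) (auto simp: BF_in_bdry hd_conv_nth split: if_splits)

lemma terminal_after_last_edge:
  assumes "edge_at \<xi> i = Some e" "edge_at \<xi> (Suc i) = None"
  shows "terminal G X (rng G e)"
proof (cases \<xi>)
  case (BF es)
  with assms have "es \<noteq> [] \<and> i = length es - 1 \<and> e = es ! i"
    by (auto split: if_splits)
  then have "es \<noteq> [] \<and> e = last es"
    by (auto simp: last_conv_nth)
  with \<xi> BF show ?thesis
    by (simp add: BF_in_bdry)
qed (use assms in auto)

lemma edge_at_0_None:
  "edge_at \<xi> 0 = None \<Longrightarrow> \<xi> = BV (bsrc G \<xi>) \<and> bsrc G \<xi> \<in> verts G \<and> terminal G X (bsrc G \<xi>)"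
  using \<xi> by (cases \<xi>) (auto simp: BV_in_bdry BF_in_bdry dest: is_fpath_nonempty)

lemma bsrc_in_verts:
  assumes "wf_graph G"
  shows "bsrc G \<xi> \<in> verts G"
proof (cases "edge_at \<xi> 0")
  case (Some e)
  with assms show ?thesis
    using edge_at_in_edges src_edge_at_0 by (force simp: wf_graph_def)
qed (use edge_at_0_None in blast)

end

lemma edge_at_BF_inject: "edge_at (BF es) = edge_at (BF es') \<Longrightarrow> es = es'"
proof -
  assume eq: "edge_at (BF es) = edge_at (BF es')"
  have "length es = length es'"
    using fun_cong[OF eq, of "length es"] fun_cong[OF eq, of "length es'"] by (auto split: if_splits)
  then show ?thesis
  proof (rule nth_equalityI)
    fix i assume "i < length es"
    with \<open>length es = length es'\<close> show "es ! i = es' ! i"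
      using fun_cong[OF eq, of i] by simp
  qed
qed

lemma bdry_eqI:
  assumes "\<zeta> \<in> bdry G X" "\<eta> \<in> bdry G X" "bsrc G \<zeta> = bsrc G \<eta>" "edge_at \<zeta> = edge_at \<eta>"
  shows "\<zeta> = \<eta>"
proof (cases "edge_at \<zeta> 0")
  case None
  with assms show ?thesis
    using edge_at_0_None by metis
next
  case (Some e)
  show ?thesis
  proof (cases \<zeta>)
    case (BF es)
    show ?thesis
    proof (cases \<eta>)
      case (BV v)
      with Some assms(4) show ?thesis
        by simp
    next
      case (BF es')
      with \<open>\<zeta> = BF es\<close> assms(4) show ?thesis
        by (simp add: edge_at_BF_inject)
    next
      case (BI g)
      with BF show ?thesis
        using fun_cong[OF assms(4), of "length es"] by simp
    qed
  next
    case (BI f)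
    show ?thesis
    proof (cases \<eta>)
      case (BF es')
      with BI show ?thesis
        using fun_cong[OF assms(4), of "length es'"] by simp
    qed (use BI Some assms(4) in \<open>auto simp: fun_eq_iff\<close>)
  qed (use Some in simp)
qed

lemma edge_at_prepend:
  "edge_at (prepend a \<eta>) i = (if i < length a then Some (a ! i) else edge_at \<eta> (i - length a))"
  by (cases \<eta>) (auto simp: nth_append)

lemma bsrc_prepend: "a \<noteq> [] \<Longrightarrow> bsrc G (prepend a \<eta>) = src G (hd a)"
  by (cases \<eta>) (auto simp: hd_conv_nth nth_append)

lemma prepend_in_bdry:
  assumes a: "is_fpath G a" and \<eta>: "\<eta> \<in> bdry G X" "bsrc G \<eta> = rng G (last a)"
  shows "prepend a \<eta> \<in> bdry G X"
proof (cases \<eta>)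
  case (BF es)
  with \<eta> have "is_fpath G (a @ es)"
    by (intro is_fpath_append a) (auto simp: BF_in_bdry)
  with \<eta> BF show ?thesis
    by (auto simp: BF_in_bdry dest: is_fpath_nonempty)
next
  case (BI f)
  with a \<eta> show ?thesis
    using is_ipath_prepend[OF a, of f] by (auto simp: BI_in_bdry)
qed (use a \<eta> in \<open>auto simp: BV_in_bdry BF_in_bdry dest: is_fpath_nonempty\<close>)


definition some_out_edge :: "('v, 'e) graph \<Rightarrow> 'v \<Rightarrow> 'e" where
  "some_out_edge G v = (SOME e. e \<in> edges G \<and> src G e = v)"

primrec greedy_vertex :: "('v, 'e) graph \<Rightarrow> 'v \<Rightarrow> nat \<Rightarrow> 'v" where
  "greedy_vertex G v 0 = v"
| "greedy_vertex G v (Suc n) = rng G (some_out_edge G (greedy_vertex G v n))"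

lemma some_out_edge:
  assumes "v \<in> verts G" "\<not> terminal G X v"
  shows "some_out_edge G v \<in> edges G \<and> src G (some_out_edge G v) = v"
proof -
  have "\<exists>e. e \<in> edges G \<and> src G e = v"
    using assms by (auto simp: terminal_def is_sink_def)
  then show ?thesis
    unfolding some_out_edge_def by (rule someI_ex)
qed

lemma greedy_walk:
  assumes wf: "wf_graph G" and v: "v \<in> verts G"
    and not_terminal: "\<forall>j<n. \<not> terminal G X (greedy_vertex G v j)"
  shows "greedy_vertex G v n \<in> verts G"
    and "j < n \<Longrightarrow> some_out_edge G (greedy_vertex G v j) \<in> edges G \<and>
                  src G (some_out_edge G (greedy_vertex G v j)) = greedy_vertex G v j"
proof -
  have "greedy_vertex G v j \<in> verts G" if "j \<le> n" for j
    using that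
  proof (induction j)
    case (Suc j)
    with not_terminal some_out_edge[of "greedy_vertex G v j" G X] wf show ?case
      by (auto simp: wf_graph_def)
  qed (simp add: v)
  then show "greedy_vertex G v n \<in> verts G"
    by simp
  assume "j < n"
  with \<open>\<And>j. j \<le> n \<Longrightarrow> greedy_vertex G v j \<in> verts G\<close> not_terminal
  show "some_out_edge G (greedy_vertex G v j) \<in> edges G \<and>
        src G (some_out_edge G (greedy_vertex G v j)) = greedy_vertex G v j"
    by (intro some_out_edge) auto
qed

lemma terminating_greedy_walk_in_bdry:
  assumes wf: "wf_graph G" and v: "v \<in> verts G"
    and terminal: "terminal G X (greedy_vertex G v n)"
    and before: "\<forall>j<n. \<not> terminal G X (greedy_vertex G v j)"
  shows "\<exists>\<eta>\<in>bdry G X. bsrc G \<eta> = v"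
proof (cases "n = 0")
  case True
  with terminal v show ?thesis
    by (intro bexI[of _ "BV v"]) (auto simp: BV_in_bdry)
next
  case False
  define w where "w i = some_out_edge G (greedy_vertex G v i)" for i
  have walk: "j < n \<Longrightarrow> w j \<in> edges G \<and> src G (w j) = greedy_vertex G v j" for j
    unfolding w_def using before by (rule greedy_walk(2)[OF wf v])
  have rng_w: "rng G (w j) = greedy_vertex G v (Suc j)" for j
    by (simp add: w_def)
  have "is_fpath G (map w [0..<n])"
    using False walk by (auto simp: is_fpath_def rng_w)
  moreover have "rng G (last (map w [0..<n])) = greedy_vertex G v n"
    using False by (cases n) (simp_all add: last_map rng_w)
  ultimately have "BF (map w [0..<n]) \<in> bdry G X"
    using terminal by (simp add: BF_in_bdry)
  moreover have "bsrc G (BF (map w [0..<n])) = v"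
    using walk[of 0] False by (simp add: hd_map)
  ultimately show ?thesis
    by blast
qed

lemma ex_bdry_path_from:
  assumes wf: "wf_graph G" and v: "v \<in> verts G"
  shows "\<exists>\<eta>\<in>bdry G X. bsrc G \<eta> = v"
proof (cases "\<exists>n. terminal G X (greedy_vertex G v n)")
  case True
  define n where "n = (LEAST n. terminal G X (greedy_vertex G v n))"
  have "terminal G X (greedy_vertex G v n)"
    unfolding n_def using True by (rule LeastI_ex)
  moreover have "\<forall>j<n. \<not> terminal G X (greedy_vertex G v j)"
    unfolding n_def by (blast dest: not_less_Least)
  ultimately show ?thesis
    by (rule terminating_greedy_walk_in_bdry[OF wf v])
next
  case False
  define w where "w i = some_out_edge G (greedy_vertex G v i)" for i
  from False have walk: "w j \<in> edges G \<and> src G (w j) = greedy_vertex G v j" for j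
    unfolding w_def by (intro greedy_walk(2)[OF wf v, of "Suc j"]) auto
  moreover have "rng G (w j) = greedy_vertex G v (Suc j)" for j
    by (simp add: w_def)
  ultimately have "BI w \<in> bdry G X"
    by (simp add: BI_in_bdry is_ipath_def)
  moreover have "bsrc G (BI w) = v"
    using walk[of 0] by simp
  ultimately show ?thesis
    by blast
qed


definition agree :: "('v, 'e) graph \<Rightarrow> nat \<Rightarrow> ('v, 'e) bpath \<Rightarrow> ('v, 'e) bpath \<Rightarrow> bool" where
  "agree G N \<zeta> \<xi> \<longleftrightarrow> bsrc G \<zeta> = bsrc G \<xi> \<and> (\<forall>i<N. edge_at \<zeta> i = edge_at \<xi> i)"

lemma agree_refl: "agree G N \<xi> \<xi>"
  by (simp add: agree_def)

lemma agree_mono: "agree G N' \<zeta> \<xi> \<Longrightarrow> N \<le> N' \<Longrightarrow> agree G N \<zeta> \<xi>"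
  by (auto simp: agree_def)

lemma has_prefix_agree:
  "agree G N \<zeta> \<xi> \<Longrightarrow> length a \<le> N \<Longrightarrow> has_prefix a \<zeta> \<longleftrightarrow> has_prefix a \<xi>"
  by (auto simp: agree_def has_prefix_iff_edge_at)

lemma U_agree:
  assumes "\<zeta> \<in> bdry G X" "\<xi> \<in> bdry G X" "agree G N \<zeta> \<xi>" "length (pos_part r) \<le> N"
  shows "\<zeta> \<in> U G X r \<longleftrightarrow> \<xi> \<in> U G X r"
  using assms has_prefix_agree[OF assms(3,4)] by (auto simp: U_def Let_def agree_def)

lemma U_subset_bdry: "\<xi> \<in> U G X t \<Longrightarrow> \<xi> \<in> bdry G X"
  by (auto simp: U_def Let_def split: if_splits)

lemma U_Nil: "U G X [] = bdry G X"
  by (simp add: U_def)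

lemma U_path_word: "is_fpath G a \<Longrightarrow> U G X (path_word a) = {\<xi> \<in> bdry G X. has_prefix a \<xi>}"
  by (simp add: U_def is_fpath_nonempty)

lemma U_inv_path_word:
  "is_fpath G b \<Longrightarrow> U G X (inv_path_word b) = {\<xi> \<in> bdry G X. bsrc G \<xi> = rng G (last b)}"
  by (simp add: U_def is_fpath_nonempty)

lemma has_prefix_Nil: "has_prefix [] \<xi>"
  by (cases \<xi>) simp_all

lemma U_has_prefix: "\<xi> \<in> U G X t \<Longrightarrow> has_prefix (pos_part t) \<xi>"
  by (auto simp: U_def Let_def has_prefix_Nil split: if_splits)

lemma U_ab_inv: "\<xi> \<in> U G X t \<Longrightarrow> is_ab_inv t"
  by (auto simp: U_def Let_def split: if_splits)

lemma U_last_neq: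
  "\<xi> \<in> U G X t \<Longrightarrow> pos_part t \<noteq> [] \<Longrightarrow> neg_part t \<noteq> [] \<Longrightarrow>
   last (pos_part t) \<noteq> last (neg_part t)"
  by (auto simp: U_def Let_def split: if_splits)

lemma pos_part_neq_neg_part:
  assumes "\<xi> \<in> U G X t" "t \<noteq> []"
  shows "pos_part t \<noteq> neg_part t"
proof
  assume eq: "pos_part t = neg_part t"
  show False
  proof (cases "pos_part t = []")
    case True
    with eq have "t = []"
      using ab_inv_eq_Nil[OF U_ab_inv[OF assms(1)]] by simp
    with assms(2) show False
      by simp
  next
    case False
    with eq U_last_neq[OF assms(1)] show False
      by simp
  qed
qed


section \<open>Fixed points of the partial maps\<close>

lemma theta_finv:
  "is_ab_inv t \<Longrightarrow> theta G (finv t) \<zeta> = prepend (neg_part t) (drop_pre G (length (pos_part t)) \<zeta>)"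
  by (simp add: theta_def finv_ab_inv)

lemma has_prefix_prepend: "has_prefix a (prepend a \<eta>)"
  by (cases \<eta>) simp_all

lemma has_prefix_unique:
  assumes "has_prefix a \<xi>" "has_prefix b \<xi>" "length a = length b"
  shows "a = b"
  using assms by (auto simp: has_prefix_iff_edge_at list_eq_iff_nth_eq)

lemma theta_finv_fixpoint_lengths:
  assumes U: "\<zeta> \<in> U G X t" and t: "t \<noteq> []" and fixed: "theta G (finv t) \<zeta> = \<zeta>"
  shows "length (pos_part t) \<noteq> length (neg_part t)"
proof
  assume "length (pos_part t) = length (neg_part t)"
  moreover have "has_prefix (pos_part t) \<zeta>"
    using U by (rule U_has_prefix)
  moreover have "has_prefix (neg_part t) \<zeta>"
    using has_prefix_prepend[of "neg_part t" "drop_pre G (length (pos_part t)) \<zeta>"] fixed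
    by (simp add: theta_finv[OF U_ab_inv[OF U]])
  ultimately show False
    using has_prefix_unique pos_part_neq_neg_part[OF U t] by blast
qed

text \<open>On a finite path \<open>\<theta>_{t^-1}\<close> changes the number of edges by \<open>|neg_part t| - |pos_part t| \<noteq> 0\<close>.\<close>

lemma theta_finv_fixpoint_infinite:
  assumes U: "\<zeta> \<in> U G X t" and t: "t \<noteq> []" and fixed: "theta G (finv t) \<zeta> = \<zeta>"
  obtains f where "\<zeta> = BI f"
proof -
  define p q where "p = pos_part t" and "q = neg_part t"
  have lengths: "length p \<noteq> length q"
    unfolding p_def q_def using U t fixed by (rule theta_finv_fixpoint_lengths)
  have fixed: "prepend q (drop_pre G (length p) \<zeta>) = \<zeta>"
    using fixed by (simp add: theta_finv[OF U_ab_inv[OF U]] p_def q_def)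
  have prefix: "has_prefix p \<zeta>"
    unfolding p_def using U by (rule U_has_prefix)
  show ?thesis
  proof (cases \<zeta>)
    case (BV v)
    with prefix fixed lengths show ?thesis
      by (cases "q = []") simp_all
  next
    case (BF es)
    with prefix have "length p \<le> length es"
      by simp
    with BF fixed lengths show ?thesis
      by (auto split: if_splits dest: arg_cong[where f = length])
  qed (rule that)
qed

lemma theta_finv_fixpoint_shift:
  assumes U: "BI f \<in> U G X t" and fixed: "theta G (finv t) (BI f) = BI f"
  shows "f (j + length (neg_part t)) = f (j + length (pos_part t))"
proof -
  have "BI f = theta G (finv t) (BI f)"
    using fixed by (rule sym)
  also have "\<dots> = BI (\<lambda>i. if i < length (neg_part t) then neg_part t ! i
                           else f (i - length (neg_part t) + length (pos_part t)))"
    by (simp add: theta_finv[OF U_ab_inv[OF U]])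
  finally have "f = (\<lambda>i. if i < length (neg_part t) then neg_part t ! i
                         else f (i - length (neg_part t) + length (pos_part t)))"
    by (simp only: bpath.inject)
  then show ?thesis
    by (subst (1) \<open>f = _\<close>) simp
qed

lemma shift_eq_imp_eventually_periodic:
  fixes a b :: nat
  assumes shift: "\<And>j. f (j + a) = f (j + b)" and i: "i \<ge> min a b"
  shows "f (i + (max a b - min a b)) = f i"
proof (cases "a \<le> b")
  case True
  have "f (i + (max a b - min a b)) = f (i - a + b)"
    using True i by (simp add: min_def max_def)
  also have "\<dots> = f (i - a + a)"
    by (rule shift[symmetric])
  also have "\<dots> = f i"
    using True i by (simp add: min_def)
  finally show ?thesis .
next
  case False
  have "f (i + (max a b - min a b)) = f (i - b + a)"
    using False i by (simp add: min_def max_def)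
  also have "\<dots> = f (i - b + b)"
    by (rule shift)
  also have "\<dots> = f i"
    using False i by (simp add: min_def)
  finally show ?thesis .
qed

lemma eventually_periodic_eqI:
  fixes f g :: "nat \<Rightarrow> 'a"
  assumes f: "\<And>i. i \<ge> m \<Longrightarrow> f (i + d) = f i" and g: "\<And>i. i \<ge> m \<Longrightarrow> g (i + d) = g i"
    and agree: "\<And>i. i < m + d \<Longrightarrow> f i = g i" and d: "0 < d"
  shows "f = g"
proof
  fix i
  show "f i = g i"
  proof (induction i rule: less_induct)
    case (less i)
    show ?case
    proof (cases "i < m + d")
      case False
      then have m: "m \<le> i - d" and i: "i - d + d = i"
        by auto
      have "f i = f (i - d)"
        using f[OF m] by (simp only: i)
      also have "\<dots> = g (i - d)"
        using False d by (intro less.IH) auto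
      also have "\<dots> = g i"
        using g[OF m] by (simp only: i)
      finally show ?thesis .
    qed (rule agree)
  qed
qed


section \<open>Condition (L) and non-isolated fixed points\<close>

lemma ex_shortest_return:
  fixes g :: "nat \<Rightarrow> 'a"
  assumes "0 < d" "g (i\<^sub>0 + d) = g i\<^sub>0" "M \<le> i\<^sub>0"
  obtains i k where "M \<le> i" "0 < k" "g (i + k) = g i" "distinct (map g [i..<i + k])"
proof -
  define returns where "returns k \<longleftrightarrow> 0 < k \<and> (\<exists>i\<ge>M. g (i + k) = g i)" for k
  define k where "k = (LEAST k. returns k)"
  have "returns d"
    using assms by (auto simp: returns_def)
  then have "returns k"
    unfolding k_def by (rule LeastI)
  then obtain i where i: "M \<le> i" "0 < k" "g (i + k) = g i"
    by (auto simp: returns_def)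
  have "g a \<noteq> g b" if "a \<in> {i..<i + k}" "b \<in> {i..<i + k}" "a < b" for a b
  proof
    assume "g a = g b"
    with that i(1) have "returns (b - a)"
      unfolding returns_def by (intro conjI exI[of _ a]) auto
    moreover have "b - a < k"
      using that by auto
    ultimately show False
      unfolding k_def by (blast dest: not_less_Least)
  qed
  then have "inj_on g {i..<i + k}"
    by (rule linorder_inj_onI')
  then have "distinct (map g [i..<i + k])"
    by (simp add: distinct_map)
  with i show ?thesis
    by (rule that)
qed

lemma ipath_segment_is_cycle:
  assumes f: "is_ipath G f" and k: "0 < k" and closed: "src G (f (i + k)) = src G (f i)"
    and dist: "distinct (map (\<lambda>j. src G (f j)) [i..<i + k])"
  shows "is_cycle G (map f [i..<i + k])"
proof -
  have "rng G (last (map f [i..<i + k])) = src G (f (i + k))"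
    using f k by (cases k) (simp_all add: is_ipath_def last_map)
  with f k closed dist show ?thesis
    by (simp add: is_cycle_def is_ipath_initial_segment hd_map comp_def)
qed

lemma truncation_in_bdry:
  assumes f: "is_ipath G f" and n: "0 < n" and Y: "src G (f n) \<in> Reg G - X"
  shows "BF (map f [0..<n]) \<in> bdry G X"
proof -
  have "rng G (last (map f [0..<n])) = src G (f n)"
    using f n by (cases n) (simp_all add: is_ipath_def last_map)
  with Y is_ipath_initial_segment[OF f n, of 0] show ?thesis
    by (simp add: BF_in_bdry terminal_def)
qed

lemma branch_in_bdry:
  assumes wf: "wf_graph G" and f: "is_ipath G f"
    and e: "e \<in> edges G" "src G e = src G (f n)"
  obtains \<zeta> where "\<zeta> \<in> bdry G X" "bsrc G \<zeta> = src G (f 0)"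
    "\<And>j. j < n \<Longrightarrow> edge_at \<zeta> j = Some (f j)" "edge_at \<zeta> n = Some e"
proof -
  define a where "a = map f [0..<n] @ [e]"
  have "is_fpath G a"
    unfolding is_fpath_def
  proof (intro conjI allI impI)
    show "a \<noteq> []" "set a \<subseteq> edges G"
      using f e unfolding a_def is_ipath_def by auto
    fix j assume "Suc j < length a"
    then consider "Suc j < n" | "Suc j = n"
      unfolding a_def by fastforce
    then show "rng G (a ! j) = src G (a ! Suc j)"
      by cases (use f e in \<open>auto simp: a_def is_ipath_def nth_append\<close>)
  qed
  moreover have "rng G e \<in> verts G"
    using wf e by (auto simp: wf_graph_def)
  then obtain \<eta> where "\<eta> \<in> bdry G X" "bsrc G \<eta> = rng G e"
    using ex_bdry_path_from[OF wf] by blast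
  ultimately have "prepend a \<eta> \<in> bdry G X"
    by (intro prepend_in_bdry) (simp_all add: a_def)
  moreover have "bsrc G (prepend a \<eta>) = src G (f 0)"
    using e by (cases n) (simp_all add: bsrc_prepend a_def hd_append hd_map)
  moreover have "edge_at (prepend a \<eta>) j = Some (if j < n then f j else e)" if "j \<le> n" for j
    using that by (auto simp: edge_at_prepend a_def nth_append)
  ultimately show ?thesis
    using that by auto
qed

lemma eventually_periodic_ipath_cycle:
  assumes f: "is_ipath G f" and periodic: "\<And>i. i \<ge> m \<Longrightarrow> f (i + d) = f i" and d: "0 < d"
  obtains i k where "N < i" "0 < k" "is_cycle G (map f [i..<i + k])"
proof -
  have "src G (f (max (Suc N) m + d)) = src G (f (max (Suc N) m))"
    using periodic by simp
  then obtain i k where "Suc N \<le> i" "0 < k" "src G (f (i + k)) = src G (f i)"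
    "distinct (map (\<lambda>j. src G (f j)) [i..<i + k])"
    using ex_shortest_return[of d "\<lambda>j. src G (f j)"] d by (metis max.cobounded1)
  with f show ?thesis
    by (intro that[of i k] ipath_segment_is_cycle) auto
qed

lemma periodic_path_not_isolated:
  fixes G :: "('v, 'e) graph"
  assumes wf: "wf_graph G" and L: "rel_condition_L G X" and f: "is_ipath G f"
    and periodic: "\<And>i. i \<ge> m \<Longrightarrow> f (i + d) = f i" and d: "0 < d"
  obtains \<zeta> where "\<zeta> \<in> bdry G X" "\<zeta> \<noteq> BI f" "agree G N \<zeta> (BI f)"
proof -
  obtain i k where i: "N < i" and "0 < k" and cycle: "is_cycle G (map f [i..<i + k])"
    using eventually_periodic_ipath_cycle[OF f periodic d] by blast
  \<comment> \<open>By Condition (L) a boundary path can leave \<open>f\<close> on this cycle, through an exit or by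
    stopping at a vertex of \<open>Y\<close>.\<close>
  from cycle L have "(\<exists>l<k. src G (f (i + l)) \<in> Reg G - X) \<or>
               (\<exists>e\<in>edges G. \<exists>l<k. src G e = src G (f (i + l)) \<and> e \<noteq> f (i + l))"
    by (auto simp: rel_condition_L_def has_exit_def)
  then consider (Y) l where "src G (f (i + l)) \<in> Reg G - X"
    | (exit) e l where "e \<in> edges G" "src G e = src G (f (i + l))" "e \<noteq> f (i + l)"
    by blast
  then show ?thesis
  proof cases
    case Y
    with f i have "BF (map f [0..<i + l]) \<in> bdry G X"
      by (intro truncation_in_bdry) auto
    moreover have "agree G N (BF (map f [0..<i + l])) (BI f)"
      using i by (auto simp: agree_def hd_map)
    ultimately show ?thesis
      by (simp add: that)
  next
    case exit
    obtain \<zeta> where "\<zeta> \<in> bdry G X" "bsrc G \<zeta> = src G (f 0)"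
      and "\<And>j. j < i + l \<Longrightarrow> edge_at \<zeta> j = Some (f j)" "edge_at \<zeta> (i + l) = Some e"
      using branch_in_bdry[OF wf f exit(1,2)] by blast
    moreover from this exit have "\<zeta> \<noteq> BI f"
      by auto
    ultimately show ?thesis
      using i by (intro that) (auto simp: agree_def)
  qed
qed

lemma theta_finv_fixpoint_periodic:
  assumes U: "BI f \<in> U G X t" and t: "t \<noteq> []" and fixed: "theta G (finv t) (BI f) = BI f"
  defines "m \<equiv> min (length (neg_part t)) (length (pos_part t))"
    and "d \<equiv> max (length (neg_part t)) (length (pos_part t)) - min (length (neg_part t)) (length (pos_part t))"
  shows "0 < d" and "i \<ge> m \<Longrightarrow> f (i + d) = f i"
proof -
  show "0 < d"
    using theta_finv_fixpoint_lengths[OF U t fixed] by (simp add: d_def)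
  show "i \<ge> m \<Longrightarrow> f (i + d) = f i"
    unfolding m_def d_def by (rule shift_eq_imp_eventually_periodic[OF theta_finv_fixpoint_shift[OF U fixed]])
qed

lemma theta_finv_fixpoint_eqI:
  assumes f: "BI f \<in> U G X t" "theta G (finv t) (BI f) = BI f"
    and g: "BI g \<in> U G X t" "theta G (finv t) (BI g) = BI g"
    and t: "t \<noteq> []" and agree: "\<And>i. i < length (pos_part t) + length (neg_part t) \<Longrightarrow> f i = g i"
  shows "f = g"
proof (rule eventually_periodic_eqI)
  let ?m = "min (length (neg_part t)) (length (pos_part t))"
  let ?d = "max (length (neg_part t)) (length (pos_part t)) - ?m"
  show "f (i + ?d) = f i" "g (i + ?d) = g i" if "i \<ge> ?m" for i
    using theta_finv_fixpoint_periodic(2)[OF f(1) t f(2) that]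
      theta_finv_fixpoint_periodic(2)[OF g(1) t g(2) that] by simp_all
  show "f i = g i" if "i < ?m + ?d" for i
    using that by (intro agree) linarith
  show "0 < ?d"
    using theta_finv_fixpoint_periodic(1)[OF f(1) t f(2)] .
qed

lemma theta_finv_nonfixed_nearby:
  fixes G :: "('v, 'e) graph"
  assumes wf: "wf_graph G" and L: "rel_condition_L G X" and U: "\<xi> \<in> U G X t" and t: "t \<noteq> []"
    and N: "length (pos_part t) + length (neg_part t) \<le> N"
  obtains \<zeta> where "\<zeta> \<in> bdry G X" "agree G N \<zeta> \<xi>" "theta G (finv t) \<zeta> \<noteq> \<zeta>"
proof (cases "theta G (finv t) \<xi> = \<xi>")
  case False
  with U show ?thesis
    using that agree_refl U_subset_bdry by blast
next
  case True
  obtain f where \<xi>: "\<xi> = BI f"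
    using theta_finv_fixpoint_infinite[OF U t True] .
  then have f: "is_ipath G f"
    using U_subset_bdry[OF U] by (simp add: BI_in_bdry)
  obtain \<zeta> where \<zeta>: "\<zeta> \<in> bdry G X" "\<zeta> \<noteq> BI f" "agree G N \<zeta> (BI f)"
    using periodic_path_not_isolated[OF wf L f] theta_finv_fixpoint_periodic[OF U[unfolded \<xi>] t True[unfolded \<xi>]]
    by metis
  have "theta G (finv t) \<zeta> \<noteq> \<zeta>"
  proof
    assume fixed: "theta G (finv t) \<zeta> = \<zeta>"
    have "\<zeta> \<in> U G X t"
      using U_agree[OF \<zeta>(1) U_subset_bdry[OF U] \<zeta>(3)[folded \<xi>]] U N by simp
    moreover obtain g where g: "\<zeta> = BI g"
      using theta_finv_fixpoint_infinite[OF \<open>\<zeta> \<in> U G X t\<close> t fixed] .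
    ultimately have "g = f"
      using \<zeta>(3) fixed U True N
      by (intro theta_finv_fixpoint_eqI[OF _ _ _ _ t]) (auto simp: \<xi> g agree_def)
    with \<zeta>(2) g show False
      by simp
  qed
  with \<zeta> \<xi> show ?thesis
    using that by blast
qed


section \<open>The diagonal algebra\<close>

lemma lspan_generator: "f \<in> S \<Longrightarrow> f \<in> lspan S"
  unfolding lspan_def by (intro CollectI exI[of _ "{f}"] exI[of _ "\<lambda>_. 1"]) simp

lemma lspan_zero: "(\<lambda>_. 0) \<in> lspan S"
  unfolding lspan_def by (intro CollectI exI[of _ "{}"]) simp

lemma lspan_diff:
  assumes "f \<in> S" "g \<in> S"
  shows "(\<lambda>x. f x - g x) \<in> lspan S"
proof (cases "f = g")
  case True
  then show ?thesis
    using lspan_zero[of S] by simp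
next
  case False
  then have "(\<lambda>x. f x - g x) = (\<lambda>x. \<Sum>h\<in>{f, g}. (if h = f then 1 else -1) * h x)"
    by simp
  with assms show ?thesis
    unfolding lspan_def by (intro CollectI exI conjI) auto
qed

lemma lspan_locally_constant:
  assumes gen: "\<And>g. g \<in> S \<Longrightarrow> \<exists>N. \<forall>x y. P N x y \<longrightarrow> g x = g y"
    and mono: "\<And>N N' x y. P N' x y \<Longrightarrow> N \<le> N' \<Longrightarrow> P N x y"
    and h: "h \<in> lspan S"
  shows "\<exists>N :: nat. \<forall>x y. P N x y \<longrightarrow> h x = h y"
proof -
  obtain T c where T: "finite T" "T \<subseteq> S" and h: "h = (\<lambda>x. \<Sum>g\<in>T. c g * g x)"
    using h unfolding lspan_def by blast
  obtain Ng where Ng: "\<And>g x y. g \<in> T \<Longrightarrow> P (Ng g) x y \<Longrightarrow> g x = g y"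
    using gen T(2) by (metis subsetD)
  have "h x = h y" if "P (\<Sum>g\<in>T. Ng g) x y" for x y
    unfolding h
  proof (intro sum.cong refl arg_cong[where f = "(*) _"])
    fix g assume "g \<in> T"
    with T(1) that show "g x = g y"
      by (intro Ng mono[OF that]) (auto intro: member_le_sum)
  qed
  then show ?thesis
    by blast
qed

lemma lspan_vanishing: "h \<in> lspan S \<Longrightarrow> (\<And>g. g \<in> S \<Longrightarrow> g x = 0) \<Longrightarrow> h x = 0"
  unfolding lspan_def by (auto intro!: sum.neutral)

lemma ind_eq_indicator: "ind G X c = indicator (U G X c)"
  and indv_eq_indicator: "indv G X v = indicator (Uv G X v)"
  by (simp_all add: fun_eq_iff ind_def indv_def indicator_def)

definition cylinder :: "('v, 'e) graph \<Rightarrow> 'v set \<Rightarrow> nat \<Rightarrow> ('v, 'e) bpath \<Rightarrow> ('v, 'e) bpath set" where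
  "cylinder G X n \<zeta> = {\<xi> \<in> bdry G X. agree G n \<xi> \<zeta>}"

definition initial_path :: "('v, 'e) bpath \<Rightarrow> nat \<Rightarrow> 'e list" where
  "initial_path \<zeta> n = map (\<lambda>j. the (edge_at \<zeta> j)) [0..<n]"

lemma initial_path:
  assumes \<zeta>: "\<zeta> \<in> bdry G X" and n: "0 < n" and edges: "\<forall>j<n. edge_at \<zeta> j \<noteq> None"
  shows "is_fpath G (initial_path \<zeta> n)" and "has_prefix (initial_path \<zeta> n) \<zeta>"
proof -
  have some: "edge_at \<zeta> j = Some (initial_path \<zeta> n ! j)" if "j < n" for j
    using edges that by (auto simp: initial_path_def)
  then show "has_prefix (initial_path \<zeta> n) \<zeta>"
    by (simp add: has_prefix_iff_edge_at initial_path_def)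
  show "is_fpath G (initial_path \<zeta> n)"
    unfolding is_fpath_def
  proof (intro conjI allI impI)
    show "initial_path \<zeta> n \<noteq> []" "set (initial_path \<zeta> n) \<subseteq> edges G"
      using n some edge_at_in_edges[OF \<zeta>] by (auto simp: initial_path_def in_set_conv_nth)
    fix i assume "Suc i < length (initial_path \<zeta> n)"
    then show "rng G (initial_path \<zeta> n ! i) = src G (initial_path \<zeta> n ! Suc i)"
      using edge_at_Suc[OF \<zeta> some some] by (simp add: initial_path_def)
  qed
qed

lemma cylinder_eq_U:
  assumes \<zeta>: "\<zeta> \<in> bdry G X" and n: "0 < n" and edges: "\<forall>j<n. edge_at \<zeta> j \<noteq> None"
  shows "cylinder G X n \<zeta> = U G X (path_word (initial_path \<zeta> n))"
proof -
  let ?a = "initial_path \<zeta> n"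
  have "agree G n \<xi> \<zeta> \<longleftrightarrow> has_prefix ?a \<xi>" if \<xi>: "\<xi> \<in> bdry G X" for \<xi>
  proof
    assume "agree G n \<xi> \<zeta>"
    with initial_path(2)[OF \<zeta> n edges] show "has_prefix ?a \<xi>"
      using has_prefix_agree[of G n \<xi> \<zeta> ?a] by (simp add: initial_path_def)
  next
    assume \<xi>a: "has_prefix ?a \<xi>"
    have \<zeta>a: "has_prefix ?a \<zeta>"
      using \<zeta> n edges by (rule initial_path)
    have same: "edge_at \<xi> j = edge_at \<zeta> j" if "j < n" for j
      using \<xi>a \<zeta>a that by (simp add: has_prefix_iff_edge_at initial_path_def)
    moreover have "bsrc G \<xi> = bsrc G \<zeta>"
      using src_edge_at_0[OF \<xi>] src_edge_at_0[OF \<zeta>] same[of 0] edges n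
      by (metis not_None_eq)
    ultimately show "agree G n \<xi> \<zeta>"
      by (simp add: agree_def)
  qed
  then show ?thesis
    by (auto simp: cylinder_def U_path_word[OF initial_path(1)[OF \<zeta> n edges]])
qed

definition D0_generators :: "('v, 'e) graph \<Rightarrow> 'v set \<Rightarrow> (('v, 'e) bpath \<Rightarrow> 'k::field) set" where
  "D0_generators G X = {ind G X p | p. p \<in> FG G \<and> p \<noteq> []} \<union> {indv G X v | v. v \<in> verts G}"

lemma D0_eq_lspan: "D0 G X = lspan (D0_generators G X)"
  by (simp add: D0_def D0_generators_def)

lemma indicator_cylinder_D0_generator:
  assumes wf: "wf_graph G" and \<zeta>: "\<zeta> \<in> bdry G X" and edges: "\<forall>j<n. edge_at \<zeta> j \<noteq> None"
  shows "indicator (cylinder G X n \<zeta>) \<in> D0_generators G X"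
proof (cases "n = 0")
  case True
  then have "indicator (cylinder G X n \<zeta>) = indv G X (bsrc G \<zeta>)"
    by (auto simp: indv_eq_indicator cylinder_def Uv_def agree_def)
  then show ?thesis
    unfolding D0_generators_def using bsrc_in_verts[OF \<zeta> wf] by auto
next
  case False
  then have "indicator (cylinder G X n \<zeta>) = ind G X (path_word (initial_path \<zeta> n))"
    by (simp add: ind_eq_indicator cylinder_eq_U[OF \<zeta> _ edges])
  then show ?thesis
    unfolding D0_generators_def using path_word_in_FG[OF initial_path(1)[OF \<zeta> _ edges]] False
    by auto
qed

lemma finite_bdry_path_extended:
  assumes \<zeta>: "\<zeta> \<in> bdry G X" and ne: "\<zeta> \<noteq> \<eta>"
    and in_cyl: "\<And>n. \<forall>j<n. edge_at \<zeta> j \<noteq> None \<Longrightarrow> \<eta> \<in> cylinder G X n \<zeta>"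
  obtains n where "\<forall>j<n. edge_at \<zeta> j \<noteq> None" "edge_at \<zeta> n = None" "edge_at \<eta> n \<noteq> None"
proof -
  from in_cyl[of 0] have \<eta>: "\<eta> \<in> bdry G X" "bsrc G \<eta> = bsrc G \<zeta>"
    by (simp_all add: cylinder_def agree_def)
  have follows: "edge_at \<eta> j = edge_at \<zeta> j" if "edge_at \<zeta> j \<noteq> None" for j
    using in_cyl[of "Suc j"] that edge_at_mono[OF that] by (simp add: cylinder_def agree_def)
  have "edge_at \<zeta> \<noteq> edge_at \<eta>"
    using bdry_eqI[OF \<zeta> \<eta>(1)] \<eta>(2) ne by auto
  then obtain i where differ: "edge_at \<zeta> i \<noteq> edge_at \<eta> i"
    by (auto simp: fun_eq_iff)
  with follows[of i] have "edge_at \<zeta> i = None"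
    by force
  with differ have i: "edge_at \<zeta> i = None" "edge_at \<eta> i \<noteq> None"
    by simp_all
  define n where "n = (LEAST i. edge_at \<zeta> i = None)"
  have "\<forall>j<n. edge_at \<zeta> j \<noteq> None" "edge_at \<zeta> n = None"
    unfolding n_def using i(1) by (auto dest: not_less_Least intro: LeastI)
  moreover have "edge_at \<eta> n \<noteq> None"
    using edge_at_mono[OF i(2)] Least_le[of "\<lambda>i. edge_at \<zeta> i = None", OF i(1)] by (simp add: n_def)
  ultimately show ?thesis
    by (rule that)
qed

lemma D0_separates_points:
  assumes wf: "wf_graph G" and \<zeta>: "\<zeta> \<in> bdry G X" and ne: "\<zeta> \<noteq> \<eta>"
  obtains a :: "('v, 'e) bpath \<Rightarrow> 'k::field" where "a \<in> D0 G X" "a \<zeta> = 1" "a \<eta> = 0"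
proof (cases "\<exists>n. (\<forall>j<n. edge_at \<zeta> j \<noteq> None) \<and> \<eta> \<notin> cylinder G X n \<zeta>")
  case True
  then obtain n where edges: "\<forall>j<n. edge_at \<zeta> j \<noteq> None" and "\<eta> \<notin> cylinder G X n \<zeta>"
    by blast
  moreover have "indicator (cylinder G X n \<zeta>) \<in> D0 G X"
    unfolding D0_eq_lspan using indicator_cylinder_D0_generator[OF wf \<zeta> edges]
    by (rule lspan_generator)
  ultimately show ?thesis
    using \<zeta> by (intro that[of "indicator (cylinder G X n \<zeta>)"]) (simp_all add: cylinder_def agree_refl)
next
  case False
  then have in_cyl: "\<eta> \<in> cylinder G X n \<zeta>" if "\<forall>j<n. edge_at \<zeta> j \<noteq> None" for n
    using that by blast
  then obtain n where \<zeta>_edges: "\<forall>j<n. edge_at \<zeta> j \<noteq> None"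
    and \<zeta>_n: "edge_at \<zeta> n = None" and \<eta>_n: "edge_at \<eta> n \<noteq> None"
    using finite_bdry_path_extended[OF \<zeta> ne] by blast
  have \<eta>: "\<eta> \<in> cylinder G X n \<zeta>"
    using in_cyl \<zeta>_edges by blast
  have \<eta>_edges: "\<forall>j<Suc n. edge_at \<eta> j \<noteq> None"
    using edge_at_mono[OF \<eta>_n] by (simp add: less_Suc_eq_le)
  \<comment> \<open>\<open>\<eta>\<close> continues the finite path \<open>\<zeta>\<close>, so subtract the cylinder of the longer prefix.\<close>
  let ?a = "\<lambda>\<xi>. indicator (cylinder G X n \<zeta>) \<xi> - indicator (cylinder G X (Suc n) \<eta>) \<xi>"
  have "?a \<in> D0 G X"
    unfolding D0_eq_lspan using indicator_cylinder_D0_generator[OF wf \<zeta> \<zeta>_edges]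
      indicator_cylinder_D0_generator[OF wf _ \<eta>_edges] \<eta>
    by (intro lspan_diff) (auto simp: cylinder_def)
  moreover have "\<zeta> \<notin> cylinder G X (Suc n) \<eta>"
    using \<zeta>_n \<eta>_n by (auto simp: cylinder_def agree_def)
  ultimately show ?thesis
    using \<zeta> \<eta> by (intro that[of ?a]) (auto simp: cylinder_def agree_refl)
qed

lemma Dp_locally_constant:
  assumes t: "t \<noteq> []" and h: "h \<in> Dp G X t"
  obtains N where "\<And>\<zeta> \<xi>. \<zeta> \<in> bdry G X \<Longrightarrow> \<xi> \<in> bdry G X \<Longrightarrow> agree G N \<zeta> \<xi> \<Longrightarrow> h \<zeta> = h \<xi>"
proof -
  let ?P = "\<lambda>N \<zeta> \<xi>. \<zeta> \<in> bdry G X \<and> \<xi> \<in> bdry G X \<and> agree G N \<zeta> \<xi>"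
  have "\<exists>N. \<forall>\<zeta> \<xi>. ?P N \<zeta> \<xi> \<longrightarrow> h \<zeta> = h \<xi>"
  proof (rule lspan_locally_constant)
    show "h \<in> lspan {(\<lambda>\<xi>. ind G X t \<xi> * ind G X q \<xi>) | q. q \<in> FG G}"
      using h t by (simp add: Dp_def)
    show "?P N \<zeta> \<xi>" if "?P N' \<zeta> \<xi>" "N \<le> N'" for N N' \<zeta> \<xi>
      using that agree_mono by blast
    fix g assume "g \<in> {(\<lambda>\<xi>. ind G X t \<xi> * ind G X q \<xi>) | q. q \<in> FG G}"
    then obtain q where g: "g = (\<lambda>\<xi>. ind G X t \<xi> * ind G X q \<xi>)"
      by blast
    have "g \<zeta> = g \<xi>" if "?P (length (pos_part t) + length (pos_part q)) \<zeta> \<xi>" for \<zeta> \<xi>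
      using that U_agree[of \<zeta> G X \<xi> "length (pos_part t) + length (pos_part q)" t]
        U_agree[of \<zeta> G X \<xi> "length (pos_part t) + length (pos_part q)" q]
      by (auto simp: g ind_def)
    then show "\<exists>N. \<forall>\<zeta> \<xi>. ?P N \<zeta> \<xi> \<longrightarrow> g \<zeta> = g \<xi>"
      by blast
  qed
  with that show ?thesis
    by blast
qed

lemma Dp_vanishes_outside_U:
  assumes "t \<noteq> []" "h \<in> Dp G X t" "\<xi> \<notin> U G X t"
  shows "h \<xi> = 0"
  using assms by (auto simp: Dp_def ind_def elim!: lspan_vanishing)


lemma CP_coeff: "x \<in> CP G X \<Longrightarrow> t \<in> FG G \<Longrightarrow> x t \<in> Dp G X t"
  and CP_support_in_FG: "x \<in> CP G X \<Longrightarrow> x t \<noteq> (\<lambda>_. 0) \<Longrightarrow> t \<in> FG G"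
  and CP_finite_support: "x \<in> CP G X \<Longrightarrow> finite {t. x t \<noteq> (\<lambda>_. 0)}"
  by (auto simp: CP_def split: if_splits dest: spec[of _ t])

lemma theta_Nil: "\<xi> \<in> bdry G X \<Longrightarrow> theta G [] \<xi> = \<xi>"
  by (cases \<xi>) (auto simp: theta_def BF_in_bdry dest: is_fpath_nonempty)

lemma alpha_Nil: "alpha G X [] f \<xi> = (if \<xi> \<in> bdry G X then f \<xi> else 0)"
  by (simp add: alpha_def U_Nil theta_Nil finv_def)

lemma alpha_zero: "alpha G X p (\<lambda>_. 0) = (\<lambda>_. 0)"
  by (simp add: alpha_def fun_eq_iff)

lemma cp_mult_delta0_right:
  assumes x: "x \<in> CP G X"
  shows "cp_mult G X x (delta0 a) g \<xi> = alpha G X g (\<lambda>\<zeta>. alpha G X (finv g) (x g) \<zeta> * a \<zeta>) \<xi>"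
proof (cases "a = (\<lambda>_. 0)")
  case True
  then show ?thesis
    by (simp add: cp_mult_def delta0_def alpha_zero)
next
  case False
  then have support: "{u. delta0 a u \<noteq> (\<lambda>_. 0)} = {[]}"
    by (auto simp: delta0_def)
  have "cp_mult G X x (delta0 a) g \<xi> = (\<Sum>t\<in>{t. x t \<noteq> (\<lambda>_. 0)}.
      if fmul t [] = g then alpha G X t (\<lambda>\<zeta>. alpha G X (finv t) (x t) \<zeta> * a \<zeta>) \<xi> else 0)"
    unfolding cp_mult_def support by (simp add: delta0_def cong: if_cong)
  also have "\<dots> = (\<Sum>t\<in>{t. x t \<noteq> (\<lambda>_. 0)}.
      if t = g then alpha G X t (\<lambda>\<zeta>. alpha G X (finv t) (x t) \<zeta> * a \<zeta>) \<xi> else 0)"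
    using fmul_Nil_right[OF CP_support_in_FG[OF x]] by (intro sum.cong) simp_all
  also have "\<dots> = alpha G X g (\<lambda>\<zeta>. alpha G X (finv g) (x g) \<zeta> * a \<zeta>) \<xi>"
    by (simp add: sum.delta[OF CP_finite_support[OF x]] alpha_zero)
  finally show ?thesis .
qed

lemma cp_mult_delta0_left:
  assumes x: "x \<in> CP G X"
  shows "cp_mult G X (delta0 a) x g \<xi> = (if \<xi> \<in> bdry G X then a \<xi> * x g \<xi> else 0)"
proof (cases "a = (\<lambda>_. 0)")
  case True
  then show ?thesis
    by (simp add: cp_mult_def delta0_def)
next
  case False
  then have support: "{u. delta0 a u \<noteq> (\<lambda>_. 0)} = {[]}"
    by (auto simp: delta0_def)
  have "cp_mult G X (delta0 a) x g \<xi> = (\<Sum>u\<in>{t. x t \<noteq> (\<lambda>_. 0)}.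
      if fmul [] u = g then alpha G X [] (\<lambda>\<zeta>. alpha G X [] a \<zeta> * x u \<zeta>) \<xi> else 0)"
    unfolding cp_mult_def support by (simp add: delta0_def finv_def cong: if_cong)
  also have "\<dots> = (\<Sum>u\<in>{t. x t \<noteq> (\<lambda>_. 0)}.
      if u = g then alpha G X [] (\<lambda>\<zeta>. alpha G X [] a \<zeta> * x u \<zeta>) \<xi> else 0)"
    using fmul_Nil_left[OF CP_support_in_FG[OF x]] by (intro sum.cong) simp_all
  also have "\<dots> = (if \<xi> \<in> bdry G X then a \<xi> * x g \<xi> else 0)"
    by (auto simp: sum.delta[OF CP_finite_support[OF x]] alpha_Nil)
  finally show ?thesis .
qed


section \<open>Relative Condition (L) implies maximality\<close>

lemma commuting_coeff_vanishes_off_fixed_points: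
  fixes x :: "'e fword \<Rightarrow> ('v, 'e) bpath \<Rightarrow> 'k::field"
  assumes wf: "wf_graph G" and x: "x \<in> CP G X"
    and comm: "\<forall>a\<in>D0 G X. cp_mult G X x (delta0 a) = cp_mult G X (delta0 a) x"
    and \<zeta>: "\<zeta> \<in> bdry G X" and moved: "theta G (finv t) \<zeta> \<noteq> \<zeta>"
  shows "x t \<zeta> = 0"
proof -
  obtain a :: "('v, 'e) bpath \<Rightarrow> 'k" where a: "a \<in> D0 G X" "a \<zeta> = 1" "a (theta G (finv t) \<zeta>) = 0"
    using D0_separates_points[OF wf \<zeta> moved[symmetric]] by blast
  have "x t \<zeta> = cp_mult G X (delta0 a) x t \<zeta>"
    by (simp add: cp_mult_delta0_left[OF x] \<zeta> a(2))
  also have "\<dots> = cp_mult G X x (delta0 a) t \<zeta>"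
    using comm a(1) by simp
  also have "\<dots> = 0"
    by (simp add: cp_mult_delta0_right[OF x] alpha_def a(3))
  finally show ?thesis .
qed

lemma rel_condition_L_imp_maximal_commutative:
  fixes G :: "('v, 'e) graph" and x :: "'e fword \<Rightarrow> ('v, 'e) bpath \<Rightarrow> 'k::field"
  assumes wf: "wf_graph G" and L: "rel_condition_L G X" and x: "x \<in> CP G X"
    and comm: "\<forall>a\<in>D0 G X. cp_mult G X x (delta0 a) = cp_mult G X (delta0 a) x"
  shows "\<exists>a\<in>D0 G X. x = delta0 a"
proof -
  have off_diagonal: "x t \<xi> = 0" if t: "t \<noteq> []" for t \<xi>
  proof (rule ccontr)
    assume \<xi>: "x t \<xi> \<noteq> 0"
    then have "x t \<noteq> (\<lambda>_. 0)"
      by auto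
    then have xt: "x t \<in> Dp G X t"
      by (rule CP_coeff[OF x CP_support_in_FG[OF x]])
    obtain N where N: "\<And>\<zeta> \<xi>. \<zeta> \<in> bdry G X \<Longrightarrow> \<xi> \<in> bdry G X \<Longrightarrow> agree G N \<zeta> \<xi> \<Longrightarrow> x t \<zeta> = x t \<xi>"
      using Dp_locally_constant[OF t xt] by blast
    have \<xi>U: "\<xi> \<in> U G X t"
      using Dp_vanishes_outside_U[OF t xt] \<xi> by blast
    obtain \<zeta> where \<zeta>: "\<zeta> \<in> bdry G X" "agree G (N + length (pos_part t) + length (neg_part t)) \<zeta> \<xi>"
      and moved: "theta G (finv t) \<zeta> \<noteq> \<zeta>"
      using theta_finv_nonfixed_nearby[OF wf L \<xi>U t] by (metis le_add2 add.assoc)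
    then have "x t \<zeta> = x t \<xi>"
      using N U_subset_bdry[OF \<xi>U] agree_mono by (metis le_add1)
    with \<xi> commuting_coeff_vanishes_off_fixed_points[OF wf x comm \<zeta>(1) moved] show False
      by simp
  qed
  have "x [] \<in> D0 G X"
    using CP_coeff[OF x Nil_in_FG] by (simp add: Dp_def)
  moreover have "x = delta0 (x [])"
    using off_diagonal by (auto simp: delta0_def fun_eq_iff)
  ultimately show ?thesis
    by blast
qed


section \<open>Exitless cycles give commuting elements\<close>

definition cycle_path :: "'e list \<Rightarrow> ('v, 'e) bpath" where
  "cycle_path cs = BI (\<lambda>i. cs ! (i mod length cs))"

lemma cycle_succ:
  assumes "is_cycle G cs"
  shows "rng G (cs ! (j mod length cs)) = src G (cs ! (Suc j mod length cs))"
proof -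
  have ne: "cs \<noteq> []"
    using assms by (simp add: is_cycle_def is_fpath_def)
  show ?thesis
  proof (cases "Suc (j mod length cs) < length cs")
    case True
    then have "Suc j mod length cs = Suc (j mod length cs)"
      by (simp add: mod_Suc)
    with True assms show ?thesis
      by (simp add: is_cycle_def is_fpath_def)
  next
    case False
    moreover have "j mod length cs < length cs"
      using ne by simp
    ultimately have "j mod length cs = length cs - 1" "Suc j mod length cs = 0"
      by (auto simp: mod_Suc)
    with ne assms show ?thesis
      by (simp add: is_cycle_def last_conv_nth hd_conv_nth)
  qed
qed

lemma cycle_path_in_bdry:
  assumes "is_cycle G cs"
  shows "cycle_path cs \<in> bdry G X"
proof -
  have "cs \<noteq> []" "set cs \<subseteq> edges G"
    using assms by (simp_all add: is_cycle_def is_fpath_def)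
  then have "cs ! (i mod length cs) \<in> edges G" for i
    by (meson length_greater_0_conv mod_less_divisor nth_mem subsetD)
  with assms show ?thesis
    by (simp add: cycle_path_def BI_in_bdry is_ipath_def cycle_succ)
qed

lemma has_prefix_cycle_path: "has_prefix cs (cycle_path cs)"
  by (simp add: cycle_path_def)

lemma exitless_cycle_not_terminal:
  assumes wf: "wf_graph G" and cyc: "is_cycle G cs" and no_exit: "\<not> has_exit G cs"
    and notY: "\<forall>i<length cs. src G (cs ! i) \<notin> Reg G - X" and k: "k < length cs"
  shows "\<not> terminal G X (src G (cs ! k))"
proof -
  have e: "cs ! k \<in> edges G"
    using cyc k by (auto simp: is_cycle_def is_fpath_def)
  with no_exit k have "{e \<in> edges G. src G e = src G (cs ! k)} = {cs ! k}"
    by (auto simp: has_exit_def)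
  with wf e have "src G (cs ! k) \<in> Reg G"
    by (auto simp: Reg_def is_regular_def wf_graph_def)
  with notY k \<open>{e \<in> edges G. src G e = src G (cs ! k)} = {cs ! k}\<close> show ?thesis
    by (auto simp: terminal_def is_sink_def)
qed

lemma exitless_cycle_edge_at:
  assumes wf: "wf_graph G" and cyc: "is_cycle G cs" and no_exit: "\<not> has_exit G cs"
    and notY: "\<forall>i<length cs. src G (cs ! i) \<notin> Reg G - X"
    and \<xi>: "\<xi> \<in> bdry G X" and prefix: "has_prefix cs \<xi>"
  shows "edge_at \<xi> i = Some (cs ! (i mod length cs))"
proof -
  have ne: "cs \<noteq> []"
    using cyc by (simp add: is_cycle_def is_fpath_def)
  show ?thesis
  proof (induction i)
    case 0
    with prefix ne show ?case
      by (simp add: has_prefix_iff_edge_at)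
  next
    case (Suc j)
    let ?k = "Suc j mod length cs"
    have k: "?k < length cs"
      using ne by simp
    have succ: "rng G (cs ! (j mod length cs)) = src G (cs ! ?k)"
      using cyc by (rule cycle_succ)
    show ?case
    proof (cases "edge_at \<xi> (Suc j)")
      case None
      with Suc succ have "terminal G X (src G (cs ! ?k))"
        using terminal_after_last_edge[OF \<xi>] by metis
      with exitless_cycle_not_terminal[OF wf cyc no_exit notY k] show ?thesis
        by contradiction
    next
      case (Some e)
      with Suc succ have "e \<in> edges G" "src G e = src G (cs ! ?k)"
        using edge_at_in_edges[OF \<xi>] edge_at_Suc[OF \<xi>] by metis+
      with no_exit k Some show ?thesis
        by (auto simp: has_exit_def)
    qed
  qed
qed

lemma exitless_cycle_unique_extension:
  assumes wf: "wf_graph G" and cyc: "is_cycle G cs" and no_exit: "\<not> has_exit G cs"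
    and notY: "\<forall>i<length cs. src G (cs ! i) \<notin> Reg G - X"
    and \<xi>: "\<xi> \<in> bdry G X" and prefix: "has_prefix cs \<xi>"
  shows "\<xi> = cycle_path cs"
proof -
  have ne: "cs \<noteq> []"
    using cyc by (simp add: is_cycle_def is_fpath_def)
  note edges = exitless_cycle_edge_at[OF assms]
  have P: "cycle_path cs \<in> bdry G X"
    using cyc by (rule cycle_path_in_bdry)
  have "bsrc G \<xi> = bsrc G (cycle_path cs)"
    using src_edge_at_0[OF \<xi>] edges[of 0] ne by (simp add: cycle_path_def)
  with \<xi> P edges show ?thesis
    by (intro bdry_eqI) (auto simp: cycle_path_def)
qed

lemma theta_path_word_cycle_path:
  assumes "is_cycle G cs"
  shows "theta G (path_word cs) (cycle_path cs) = cycle_path cs"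
proof -
  have "(\<lambda>i. if i < length cs then cs ! i else cs ! ((i - length cs) mod length cs)) =
        (\<lambda>i. cs ! (i mod length cs))"
    by (auto simp: fun_eq_iff le_mod_geq)
  then show ?thesis
    by (simp add: theta_def cycle_path_def)
qed

lemma theta_finv_path_word_cycle_path:
  "theta G (finv (path_word cs)) (cycle_path cs) = cycle_path cs"
  using finv_words[of cs "[]"] by (simp add: theta_def cycle_path_def)

lemma cycle_path_in_U_finv:
  assumes "is_cycle G cs"
  shows "cycle_path cs \<in> U G X (finv (path_word cs))"
proof -
  have "finv (path_word cs) = inv_path_word cs"
    using finv_words[of cs "[]"] by simp
  moreover have "cs \<noteq> []"
    using assms by (simp add: is_cycle_def is_fpath_def)
  ultimately show ?thesis
    using assms cycle_path_in_bdry[OF assms]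
    by (simp add: U_inv_path_word is_cycle_def cycle_path_def hd_conv_nth)
qed

lemma single_fixed_point_coeff_commutes:
  assumes x: "x \<in> CP G X" and x_eq: "x = (\<lambda>t. if t = c then ind G X c else (\<lambda>_. 0))"
    and U: "U G X c = {P}" and P: "P \<in> U G X (finv c)"
    and fixed: "theta G c P = P" "theta G (finv c) P = P"
  shows "cp_mult G X x (delta0 a) = cp_mult G X (delta0 a) x"
proof (intro ext)
  fix g \<xi>
  have "P \<in> bdry G X"
    using U U_subset_bdry by blast
  then have "alpha G X g (\<lambda>\<zeta>. alpha G X (finv g) (x g) \<zeta> * a \<zeta>) \<xi> =
             (if \<xi> \<in> bdry G X then a \<xi> * x g \<xi> else 0)"
    using P fixed by (auto simp: x_eq alpha_def U ind_def)
  then show "cp_mult G X x (delta0 a) g \<xi> = cp_mult G X (delta0 a) x g \<xi>"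
    by (simp add: cp_mult_delta0_right[OF x] cp_mult_delta0_left[OF x])
qed

lemma single_coeff_in_CP:
  assumes c: "c \<in> FG G" "c \<noteq> []"
  shows "(\<lambda>t. if t = c then ind G X c else (\<lambda>_. 0)) \<in> (CP G X :: (_ \<Rightarrow> _ \<Rightarrow> 'k::field) set)"
proof -
  have "ind G X c = (\<lambda>\<xi>. ind G X c \<xi> * ind G X [] \<xi> :: 'k)"
    using U_subset_bdry[of _ G X c] by (auto simp: fun_eq_iff ind_def U_Nil)
  then have "ind G X c \<in> (Dp G X c :: (_ \<Rightarrow> 'k) set)"
    using c Nil_in_FG by (auto simp: Dp_def intro!: lspan_generator)
  with c show ?thesis
    by (auto simp: CP_def Dp_def D0_def lspan_zero intro: finite_subset[of _ "{c}"])
qed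

lemma U_exitless_cycle:
  assumes "wf_graph G" "is_cycle G cs" "\<not> has_exit G cs" "\<forall>i<length cs. src G (cs ! i) \<notin> Reg G - X"
  shows "U G X (path_word cs) = {cycle_path cs}"
  using exitless_cycle_unique_extension[OF assms] cycle_path_in_bdry[OF assms(2)] has_prefix_cycle_path
    assms(2) by (auto simp: U_path_word is_cycle_def)

lemma not_rel_condition_L_imp_not_maximal:
  fixes G :: "('v, 'e) graph"
  assumes wf: "wf_graph G" and not_L: "\<not> rel_condition_L G X"
  shows "\<exists>x \<in> (CP G X :: ('e fword \<Rightarrow> ('v, 'e) bpath \<Rightarrow> 'k::field) set).
           (\<forall>a\<in>D0 G X. cp_mult G X x (delta0 a) = cp_mult G X (delta0 a) x) \<and>
           \<not> (\<exists>a\<in>D0 G X. x = delta0 a)"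
proof -
  obtain cs where cyc: "is_cycle G cs" and notY: "\<forall>i<length cs. src G (cs ! i) \<notin> Reg G - X"
    and no_exit: "\<not> has_exit G cs"
    using not_L unfolding rel_condition_L_def by blast
  define c where "c = path_word cs"
  define x :: "'e fword \<Rightarrow> ('v, 'e) bpath \<Rightarrow> 'k" where "x = (\<lambda>t. if t = c then ind G X c else (\<lambda>_. 0))"
  have U: "U G X c = {cycle_path cs}"
    unfolding c_def using wf cyc no_exit notY by (rule U_exitless_cycle)
  have c: "c \<in> FG G" "c \<noteq> []"
    using path_word_in_FG cyc by (auto simp: c_def is_cycle_def)
  then have x: "x \<in> CP G X"
    unfolding x_def by (rule single_coeff_in_CP)
  moreover have "cp_mult G X x (delta0 a) = cp_mult G X (delta0 a) x" for a
  proof (rule single_fixed_point_coeff_commutes[OF x x_def U])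
    show "cycle_path cs \<in> U G X (finv c)"
      unfolding c_def by (rule cycle_path_in_U_finv[OF cyc])
    show "theta G c (cycle_path cs) = cycle_path cs"
      unfolding c_def by (rule theta_path_word_cycle_path[OF cyc])
    show "theta G (finv c) (cycle_path cs) = cycle_path cs"
      unfolding c_def by (rule theta_finv_path_word_cycle_path)
  qed
  moreover have "\<not> (\<exists>a\<in>D0 G X. x = delta0 a)"
  proof
    assume "\<exists>a\<in>D0 G X. x = delta0 a"
    then have "x c (cycle_path cs) = 0"
      using c(2) by (auto simp: delta0_def)
    moreover have "x c (cycle_path cs) = 1"
      using U by (simp add: x_def ind_def)
    ultimately show False
      by simp
  qed
  ultimately show ?thesis
    by blast
qed

theorem mainTheorem8:
  fixes G :: "('v, 'e) graph" and X :: "'v set"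
  assumes "wf_graph G" and "X \<subseteq> Reg G"
  shows "(\<forall>x \<in> (CP G X :: ('e fword \<Rightarrow> ('v, 'e) bpath \<Rightarrow> 'k::field) set).
             (\<forall>a \<in> D0 G X. cp_mult G X x (delta0 a) = cp_mult G X (delta0 a) x)
             \<longrightarrow> (\<exists>a \<in> D0 G X. x = delta0 a))
         \<longleftrightarrow> rel_condition_L G X"
  using rel_condition_L_imp_maximal_commutative[OF assms(1)]
    not_rel_condition_L_imp_not_maximal[OF assms(1)] by blast

end
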